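(* Let $F$ be a field of characteristic zero, $G$ a finite group, $A$ a $G$-graded PI-algebra, $n$ a positive integer, and let $\mathcal{U}(n;A)\subseteq M_n(\mathcal{U}_G(A))$ be the algebra generated by the generic matrices $\xi_k^{(g)}=(x_{ij,k}^{(g)}+T_G(A))_{1\le i,j\le n}$, $k\in\mathbb{N}$, $g\in G$. Let $f_1,\dots,f_n\in\mathcal{U}(n;A)$, fix $k\in\{1,\dots,n\}$, and let $f_i^k$ denote the $k$-th column of $f_i$ (a column vector with entries in $\mathcal{U}_G(A)$). Then $\{f_1^k,\dots,f_n^k\}$ is linearly independent over $F$ if and only if $\{f_1,\dots,f_n\}$ is linearly independent over $F$.
   Context: All algebras are associative and unitary. The $x_{ij,k}^{(g)}$ are pairwise distinct free variables of degree $g$. $F\langle X\rangle$ is the free associative algebra on a disjoint union $X=\bigcup_{g\in G}X^g$ of countable sets of variables of degree $g$, naturally $G$-graded. For a $G$-graded algebra $A$, $T_G(A)$ is its ideal of graded polynomial identities and $\mathcal{U}_G(A)=F\langle X\rangle/T_G(A)$ its relatively free $G$-graded algebra. *)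

theory Defs
  imports Main
begin

section \<open>Free associative algebra F<V> as finitely supported functions on words\<close>

type_synonym ('v, 'f) fpoly = "'v list \<Rightarrow> 'f"

definition is_poly :: "('v, 'f::zero) fpoly \<Rightarrow> bool" where
  "is_poly p \<longleftrightarrow> finite {w. p w \<noteq> 0}"

definition pzero :: "('v, 'f::zero) fpoly" where
  "pzero = (\<lambda>w. 0)"

definition pone :: "('v, 'f::{zero,one}) fpoly" where
  "pone = (\<lambda>w. if w = [] then 1 else 0)"

definition pvar :: "'v \<Rightarrow> ('v, 'f::{zero,one}) fpoly" where
  "pvar v = (\<lambda>w. if w = [v] then 1 else 0)"

definition padd :: "('v, 'f::plus) fpoly \<Rightarrow> ('v, 'f) fpoly \<Rightarrow> ('v, 'f) fpoly" where
  "padd p q = (\<lambda>w. p w + q w)"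

definition psmul :: "'f::times \<Rightarrow> ('v, 'f) fpoly \<Rightarrow> ('v, 'f) fpoly" where
  "psmul c p = (\<lambda>w. c * p w)"

definition pmul :: "('v, 'f::comm_semiring_1) fpoly \<Rightarrow> ('v, 'f) fpoly \<Rightarrow> ('v, 'f) fpoly" where
  "pmul p q = (\<lambda>w. \<Sum>i\<in>{0..length w}. p (take i w) * q (drop i w))"

definition psum :: "('i \<Rightarrow> ('v, 'f::comm_monoid_add) fpoly) \<Rightarrow> 'i set \<Rightarrow> ('v, 'f) fpoly" where
  "psum P I = (\<lambda>w. \<Sum>i\<in>I. P i w)"

definition peval :: "('f::zero \<Rightarrow> 'a::{monoid_mult,comm_monoid_add} \<Rightarrow> 'a)
    \<Rightarrow> ('v \<Rightarrow> 'a) \<Rightarrow> ('v, 'f) fpoly \<Rightarrow> 'a" where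
  "peval smul \<phi> p = (\<Sum>w\<in>{w. p w \<noteq> 0}. smul (p w) (prod_list (map \<phi> w)))"

definition f_algebra :: "('f::field \<Rightarrow> 'a::ring_1 \<Rightarrow> 'a) \<Rightarrow> bool" where
  "f_algebra smul \<longleftrightarrow>
     (\<forall>c a b. smul c (a + b) = smul c a + smul c b) \<and>
     (\<forall>c d a. smul (c + d) a = smul c a + smul d a) \<and>
     (\<forall>c d a. smul (c * d) a = smul c (smul d a)) \<and>
     (\<forall>a. smul 1 a = a) \<and>
     (\<forall>c a b. smul c (a * b) = smul c a * b) \<and>
     (\<forall>c a b. smul c (a * b) = a * smul c b)"

text \<open>A G-grading A = (direct sum over g in G of A_g) with A_g A_h \<subseteq> A_(g h); the group G is
  a finite group written additively (type class group_add, not necessarily commutative).\<close>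
definition graded_algebra ::
  "('f::field \<Rightarrow> 'a::ring_1 \<Rightarrow> 'a) \<Rightarrow> ('g::{group_add,finite} \<Rightarrow> 'a set) \<Rightarrow> bool" where
  "graded_algebra smul Agr \<longleftrightarrow>
     (\<forall>g. 0 \<in> Agr g \<and> (\<forall>x\<in>Agr g. \<forall>y\<in>Agr g. x + y \<in> Agr g) \<and>
          (\<forall>c. \<forall>x\<in>Agr g. smul c x \<in> Agr g)) \<and>
     (\<forall>a. \<exists>!d. (\<forall>g. d g \<in> Agr g) \<and> a = (\<Sum>g\<in>UNIV. d g)) \<and>
     (\<forall>g h. \<forall>x\<in>Agr g. \<forall>y\<in>Agr h. x * y \<in> Agr (g + h))"

definition is_PI :: "('f::field \<Rightarrow> 'a::ring_1 \<Rightarrow> 'a) \<Rightarrow> bool" where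
  "is_PI smul \<longleftrightarrow>
     (\<exists>p :: (nat, 'f) fpoly. is_poly p \<and> p \<noteq> pzero \<and> (\<forall>\<phi>. peval smul \<phi> p = 0))"

text \<open>Variables of degree g: X^g = {g} \<times> (nat \<times> nat \<times> nat), a countable set; the variable
  (g,(i,j,k)) plays the role of x_{ij,k}^{(g)} (0-based indices).\<close>
type_synonym 'g gvar = "'g \<times> nat \<times> nat \<times> nat"

definition graded_assignment :: "('g \<Rightarrow> 'a set) \<Rightarrow> ('g gvar \<Rightarrow> 'a) \<Rightarrow> bool" where
  "graded_assignment Agr \<phi> \<longleftrightarrow> (\<forall>v. \<phi> v \<in> Agr (fst v))"

definition TG :: "('f::field \<Rightarrow> 'a::ring_1 \<Rightarrow> 'a) \<Rightarrow> ('g \<Rightarrow> 'a set) \<Rightarrow> ('g gvar, 'f) fpoly set" where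
  "TG smul Agr = {p. is_poly p \<and> (\<forall>\<phi>. graded_assignment Agr \<phi> \<longrightarrow> peval smul \<phi> p = 0)}"

text \<open>n x n matrices over F<X>, entries indexed by 0..n-1 (entries outside are irrelevant).\<close>
type_synonym ('g, 'f) gmat = "nat \<Rightarrow> nat \<Rightarrow> ('g gvar, 'f) fpoly"

definition mat_one :: "('g, 'f::{zero,one}) gmat" where
  "mat_one = (\<lambda>r s. if r = s then pone else pzero)"

definition generic_matrix :: "'g \<Rightarrow> nat \<Rightarrow> ('g, 'f::{zero,one}) gmat" where
  "generic_matrix g k = (\<lambda>i j. pvar (g, i, j, k))"

definition mat_add :: "('g, 'f::plus) gmat \<Rightarrow> ('g, 'f) gmat \<Rightarrow> ('g, 'f) gmat" where
  "mat_add M N = (\<lambda>r s. padd (M r s) (N r s))"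

definition mat_smul :: "'f::times \<Rightarrow> ('g, 'f) gmat \<Rightarrow> ('g, 'f) gmat" where
  "mat_smul c M = (\<lambda>r s. psmul c (M r s))"

definition mat_mul :: "nat \<Rightarrow> ('g, 'f::comm_semiring_1) gmat \<Rightarrow> ('g, 'f) gmat \<Rightarrow> ('g, 'f) gmat" where
  "mat_mul n M N = (\<lambda>r s. psum (\<lambda>t. pmul (M r t) (N t s)) {..<n})"

text \<open>The (unital) F-subalgebra of M_n(F<X>) generated by the generic matrices.  Its image
  under the entrywise quotient map F<X> \<rightarrow> U_G(A) is U(n;A).\<close>
inductive_set generic_alg :: "nat \<Rightarrow> ('g, 'f::field) gmat set" for n where
  one: "mat_one \<in> generic_alg n"
| gen: "generic_matrix g k \<in> generic_alg n"
| add: "M \<in> generic_alg n \<Longrightarrow> N \<in> generic_alg n \<Longrightarrow> mat_add M N \<in> generic_alg n"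
| smul: "M \<in> generic_alg n \<Longrightarrow> mat_smul c M \<in> generic_alg n"
| mul: "M \<in> generic_alg n \<Longrightarrow> N \<in> generic_alg n \<Longrightarrow> mat_mul n M N \<in> generic_alg n"

text \<open>The family f_0..f_(n-1) of matrices (classes mod T_G(A) entrywise) is F-linearly independent.\<close>
definition mats_lin_indep ::
  "('f::field \<Rightarrow> 'a::ring_1 \<Rightarrow> 'a) \<Rightarrow> ('g \<Rightarrow> 'a set) \<Rightarrow> nat \<Rightarrow> (nat \<Rightarrow> ('g, 'f) gmat) \<Rightarrow> bool" where
  "mats_lin_indep smul Agr n f \<longleftrightarrow>
     (\<forall>c :: nat \<Rightarrow> 'f.
        (\<forall>r<n. \<forall>s<n. psum (\<lambda>i. psmul (c i) (f i r s)) {..<n} \<in> TG smul Agr)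
        \<longrightarrow> (\<forall>i<n. c i = 0))"

definition cols_lin_indep ::
  "('f::field \<Rightarrow> 'a::ring_1 \<Rightarrow> 'a) \<Rightarrow> ('g \<Rightarrow> 'a set) \<Rightarrow> nat \<Rightarrow> (nat \<Rightarrow> ('g, 'f) gmat) \<Rightarrow> nat \<Rightarrow> bool" where
  "cols_lin_indep smul Agr n f k \<longleftrightarrow>
     (\<forall>c :: nat \<Rightarrow> 'f.
        (\<forall>r<n. psum (\<lambda>i. psmul (c i) (f i r k)) {..<n} \<in> TG smul Agr)
        \<longrightarrow> (\<forall>i<n. c i = 0))"

end

theory Submission
  imports Defs "HOL-Combinatorics.Permutations"
begin

text \<open>Conjugating a matrix by the permutation matrix of an index permutation \<sigma> amounts, on the
  algebra generated by the generic matrices, to renaming every variable x_{ij,m}^{(g)} to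
  x_{\<sigma>(i)\<sigma>(j),m}^{(g)}.  Such a degree-preserving renaming maps graded identities to graded
  identities, so it carries an F-linear relation among the entries (r,k) of f_1,...,f_n to
  the same relation among the entries (\<sigma>(r),\<sigma>(k)).  Taking for \<sigma> the transposition of k and s
  turns a relation among the k-th columns into one among the s-th columns; the converse
  direction is immediate.\<close>

definition rename_vars :: "('v \<Rightarrow> 'v) \<Rightarrow> ('v, 'f) fpoly \<Rightarrow> ('v, 'f) fpoly" where
  "rename_vars \<tau> p = (\<lambda>w. p (map (inv \<tau>) w))"

lemma rename_vars_support:
  assumes "bij \<tau>"
  shows "{w. rename_vars \<tau> p w \<noteq> 0} = map \<tau> ` {w. p w \<noteq> 0}"
proof -
  have "map \<tau> (map (inv \<tau>) w) = w" "map (inv \<tau>) (map \<tau> w) = w" for w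
    using assms by (simp_all add: bij_def surj_iff inv_o_cancel)
  then show ?thesis
    unfolding rename_vars_def by (auto intro: image_eqI[where x = "map (inv \<tau>) _"])
qed

lemma is_poly_rename_vars: "bij \<tau> \<Longrightarrow> is_poly p \<Longrightarrow> is_poly (rename_vars \<tau> p)"
  unfolding is_poly_def by (simp add: rename_vars_support)

lemma peval_rename_vars:
  assumes "bij \<tau>"
  shows "peval smul \<phi> (rename_vars \<tau> p) = peval smul (\<phi> \<circ> \<tau>) p"
proof -
  have inj: "inj (map \<tau>)"
    using assms by (simp add: bij_is_inj inj_mapI)
  have "peval smul \<phi> (rename_vars \<tau> p)
      = (\<Sum>w\<in>map \<tau> ` {w. p w \<noteq> 0}. smul (rename_vars \<tau> p w) (prod_list (map \<phi> w)))"
    unfolding peval_def rename_vars_support[OF assms] ..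
  also have "\<dots> = (\<Sum>w\<in>{w. p w \<noteq> 0}.
      smul (rename_vars \<tau> p (map \<tau> w)) (prod_list (map \<phi> (map \<tau> w))))"
    by (rule sum.reindex[OF inj_on_subset[OF inj subset_UNIV], unfolded comp_def])
  also have "\<dots> = peval smul (\<phi> \<circ> \<tau>) p"
    using assms by (simp add: peval_def rename_vars_def bij_is_inj)
  finally show ?thesis .
qed

lemma graded_assignment_comp:
  assumes "\<And>v. fst (\<tau> v) = fst v" and "graded_assignment Agr \<phi>"
  shows "graded_assignment Agr (\<phi> \<circ> \<tau>)"
  using assms unfolding graded_assignment_def by (metis comp_apply)

lemma TG_rename_vars:
  assumes "bij \<tau>" and "\<And>v. fst (\<tau> v) = fst v" and "p \<in> TG smul Agr"
  shows "rename_vars \<tau> p \<in> TG smul Agr"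
proof -
  have "peval smul \<phi> (rename_vars \<tau> p) = 0" if "graded_assignment Agr \<phi>" for \<phi>
    using assms(3) graded_assignment_comp[OF assms(2) that]
    by (simp add: TG_def peval_rename_vars[OF assms(1)])
  with assms(1,3) show ?thesis
    by (simp add: TG_def is_poly_rename_vars)
qed

lemma rename_vars_pone: "rename_vars \<tau> pone = pone"
  by (simp add: rename_vars_def pone_def)

lemma rename_vars_pzero: "rename_vars \<tau> pzero = pzero"
  by (simp add: rename_vars_def pzero_def)

lemma rename_vars_pvar:
  assumes "bij \<tau>"
  shows "rename_vars \<tau> (pvar v) = pvar (\<tau> v)"
proof -
  have "map (inv \<tau>) w = [v] \<longleftrightarrow> w = [\<tau> v]" for w
    using assms by (auto simp: bij_is_inj bij_is_surj surj_f_inv_f bij_inv_eq_iff)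
  then show ?thesis
    by (simp add: rename_vars_def pvar_def)
qed

lemma rename_vars_padd: "rename_vars \<tau> (padd p q) = padd (rename_vars \<tau> p) (rename_vars \<tau> q)"
  by (simp add: rename_vars_def padd_def)

lemma rename_vars_psmul: "rename_vars \<tau> (psmul c p) = psmul c (rename_vars \<tau> p)"
  by (simp add: rename_vars_def psmul_def)

lemma rename_vars_pmul: "rename_vars \<tau> (pmul p q) = pmul (rename_vars \<tau> p) (rename_vars \<tau> q)"
  by (simp add: rename_vars_def pmul_def take_map drop_map)

lemma rename_vars_psum: "rename_vars \<tau> (psum P I) = psum (\<lambda>i. rename_vars \<tau> (P i)) I"
  by (simp add: rename_vars_def psum_def)

definition index_perm :: "(nat \<Rightarrow> nat) \<Rightarrow> 'g gvar \<Rightarrow> 'g gvar" where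
  "index_perm \<sigma> = (\<lambda>(g, i, j, m). (g, \<sigma> i, \<sigma> j, m))"

lemma fst_index_perm [simp]: "fst (index_perm \<sigma> v) = fst v"
  by (simp add: index_perm_def split_beta)

lemma bij_index_perm:
  assumes "bij \<sigma>"
  shows "bij (index_perm \<sigma>)"
proof (rule o_bij)
  show "index_perm (inv \<sigma>) \<circ> index_perm \<sigma> = id" "index_perm \<sigma> \<circ> index_perm (inv \<sigma>) = id"
    using assms by (auto simp: index_perm_def fun_eq_iff bij_is_inj bij_is_surj surj_f_inv_f)
qed

lemma generic_alg_rename_index_perm:
  assumes "\<sigma> permutes {..<n}" and "M \<in> generic_alg n"
  shows "rename_vars (index_perm \<sigma>) (M r s) = M (\<sigma> r) (\<sigma> s)"
  using assms(2)
proof (induction arbitrary: r s)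
  case one
  have "\<sigma> r = \<sigma> s \<longleftrightarrow> r = s"
    using permutes_inj[OF assms(1)] by (meson injD)
  then show ?case
    by (simp add: mat_one_def rename_vars_pone rename_vars_pzero)
next
  case (gen g m)
  show ?case
    by (simp add: generic_matrix_def rename_vars_pvar bij_index_perm permutes_bij[OF assms(1)])
      (simp add: index_perm_def)
next
  case (mul M N)
  have "rename_vars (index_perm \<sigma>) (mat_mul n M N r s)
      = psum (\<lambda>t. pmul (M (\<sigma> r) (\<sigma> t)) (N (\<sigma> t) (\<sigma> s))) {..<n}"
    by (simp add: mat_mul_def rename_vars_psum rename_vars_pmul mul.IH)
  also have "\<dots> = psum (\<lambda>t. pmul (M (\<sigma> r) t) (N t (\<sigma> s))) (\<sigma> ` {..<n})"
    unfolding psum_def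
    by (subst sum.reindex) (auto intro: inj_on_subset[OF permutes_inj[OF assms(1)]])
  also have "\<dots> = mat_mul n M N (\<sigma> r) (\<sigma> s)"
    by (simp add: permutes_image[OF assms(1)] mat_mul_def)
  finally show ?case .
qed (simp_all add: mat_add_def mat_smul_def rename_vars_padd rename_vars_psmul)

lemma TG_lin_comb_permute_entry:
  assumes "\<sigma> permutes {..<n}" and "\<forall>i<n. f i \<in> generic_alg n"
    and "psum (\<lambda>i. psmul (c i) (f i r s)) {..<n} \<in> TG smul Agr"
  shows "psum (\<lambda>i. psmul (c i) (f i (\<sigma> r) (\<sigma> s))) {..<n} \<in> TG smul Agr"
proof -
  have "rename_vars (index_perm \<sigma>) (f i r s) = f i (\<sigma> r) (\<sigma> s)" if "i \<in> {..<n}" for i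
    using assms(2) that by (intro generic_alg_rename_index_perm[OF assms(1)]) simp
  then have "psum (\<lambda>i. psmul (c i) (f i (\<sigma> r) (\<sigma> s))) {..<n}
      = psum (\<lambda>i. psmul (c i) (rename_vars (index_perm \<sigma>) (f i r s))) {..<n}"
    unfolding psum_def by simp
  also have "\<dots> = rename_vars (index_perm \<sigma>) (psum (\<lambda>i. psmul (c i) (f i r s)) {..<n})"
    by (simp add: rename_vars_psum rename_vars_psmul)
  finally show ?thesis
    using TG_rename_vars[OF bij_index_perm[OF permutes_bij[OF assms(1)]] fst_index_perm assms(3)]
    by simp
qed

lemma TG_lin_comb_column_imp_entry:
  assumes "\<forall>i<n. f i \<in> generic_alg n" and "k < n"
    and col: "\<forall>r<n. psum (\<lambda>i. psmul (c i) (f i r k)) {..<n} \<in> TG smul Agr"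
    and "r < n" and "s < n"
  shows "psum (\<lambda>i. psmul (c i) (f i r s)) {..<n} \<in> TG smul Agr"
proof -
  let ?\<sigma> = "Transposition.transpose k s"
  have \<sigma>: "?\<sigma> permutes {..<n}"
    using \<open>k < n\<close> \<open>s < n\<close> by (simp add: permutes_swap_id)
  then have "?\<sigma> r < n"
    using \<open>r < n\<close> permutes_in_image by fastforce
  with col have "psum (\<lambda>i. psmul (c i) (f i (?\<sigma> r) k)) {..<n} \<in> TG smul Agr"
    by blast
  from TG_lin_comb_permute_entry[OF \<sigma> assms(1) this] show ?thesis
    by simp
qed

theorem corollary6p2:
  fixes smul :: "'f::field_char_0 \<Rightarrow> 'a::ring_1 \<Rightarrow> 'a"
    and Agr :: "'g::{group_add,finite} \<Rightarrow> 'a set"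
    and n k :: nat
    and f :: "nat \<Rightarrow> ('g, 'f) gmat"
  assumes "f_algebra smul"
    and "graded_algebra smul Agr"
    and "is_PI smul"
    and "0 < n"
    and "\<forall>i<n. f i \<in> generic_alg n"
    and "k < n"
  shows "cols_lin_indep smul Agr n f k \<longleftrightarrow> mats_lin_indep smul Agr n f"
proof
  assume "cols_lin_indep smul Agr n f k"
  then show "mats_lin_indep smul Agr n f"
    unfolding cols_lin_indep_def mats_lin_indep_def using \<open>k < n\<close> by blast
next
  assume "mats_lin_indep smul Agr n f"
  then show "cols_lin_indep smul Agr n f k"
    unfolding cols_lin_indep_def mats_lin_indep_def
    using TG_lin_comb_column_imp_entry[OF assms(5,6)] by blast
qed

end
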